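(* Let $n\ge4$, $0<\alpha_2,\alpha_3<1$, $\alpha_1=1-\alpha_2-\alpha_3$, $\lambda^*=\big(\frac{n-1+\alpha_1}{n},\frac{\alpha_2}{n},\frac{\alpha_3}{n}\big)$. Then $$\sum_{i_2=0}^{n}|l_{(n-i_2,i_2,0)}(\lambda^* )|\le\frac{2^{n+1}}{e\,n(\ln n-\ln2)}\Big(1+\frac{15}{n-3}\Big)\Big(1+\frac{e(\ln n-1)\,n(n+1)}{2^{n+1}}\Big),$$ $$\sum_{i_3=1}^{n}|l_{(n-i_3,0,i_3)}(\lambda^* )|\le\frac{2^{n+1}}{e\,n(\ln n-\ln2)}\Big(1+\frac{15}{n-3}\Big)\Big(1+\frac{e(\ln n-1)\,n^2}{2^{n+1}}\Big).$$
   Context: For an integer $n\ge1$ and $i=(i_1,i_2,i_3)\in\mathbb{Z}_+^3$ with $i_1+i_2+i_3=n$, $l_i(\lambda)=\prod_{s=1}^{3}\frac{1}{i_s!}\prod_{t=0}^{i_s-1}(n\lambda_s-t)$ for $\lambda=(\lambda_1,\lambda_2,\lambda_3)$ (Lagrange fundamental polynomials for the equally spaced nodes $i/n$ of a triangle in barycentric coordinates). *)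

theory Defs
  imports "HOL-Analysis.Analysis"
begin

text \<open>Lagrange fundamental polynomial for the equally spaced nodes i/n of a triangle,
  in barycentric coordinates. Index i = (i1,i2,i3) with i1+i2+i3 = n,
  point lam = (lam1,lam2,lam3).\<close>

definition lag_factor :: "nat \<Rightarrow> nat \<Rightarrow> real \<Rightarrow> real" where
  "lag_factor n k x = (1 / fact k) * (\<Prod>t<k. real n * x - real t)"

definition lagrange_l :: "nat \<Rightarrow> nat \<times> nat \<times> nat \<Rightarrow> real \<times> real \<times> real \<Rightarrow> real" where
  "lagrange_l n i lam =
     (case i of (i1, i2, i3) \<Rightarrow> case lam of (l1, l2, l3) \<Rightarrow>
        lag_factor n i1 l1 * lag_factor n i2 l2 * lag_factor n i3 l3)"

end

theory Submission
  imports Defs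
begin

text \<open>On the edges \<open>\<lambda>\<^sub>3 = 0\<close> and \<open>\<lambda>\<^sub>2 = 0\<close> the Lagrange polynomials at \<lambda>* are products of
  generalised binomial coefficients \<open>((n - 1 + \<alpha>\<^sub>1) gchoose (n - k)) (\<beta> gchoose k)\<close>, with \<open>\<beta> = \<alpha>\<^sub>2\<close>
  resp. \<open>\<alpha>\<^sub>3\<close>. Bounding the first factor by (n - \<beta>) gchoose (n - k), the Pochhammer symbols
  telescope and the k-th term (k \<ge> 1) is at most C(n,k) (1 - \<beta>)/(k - \<beta>) times
  \<beta> \<Prod>m=2..n. (1 - \<beta>/m). Comparing the factors with exp (-\<beta>/m) and the harmonic sum with
  ln n - ln 2, the latter is at most \<beta> exp (-\<beta> (ln n - ln 2)) \<le> 1/(e (ln n - ln 2)), uniformly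
  in \<beta>. For k \<ge> 2 the ratio (1 - \<beta>)/(k - \<beta>) is at most 1/(k+1) + 8/((k+1)(k+2)), which turns
  the remaining sum into shifted rows of Pascal's triangle, each bounded by a power of 2.\<close>

lemma lag_factor_scaled:
  assumes "n > 0"
  shows "lag_factor n k (y / real n) = y gchoose k"
  using assms by (simp add: lag_factor_def gbinomial_prod_rev atLeast0LessThan)

lemma abs_gchoose_le_gchoose:
  fixes x y :: real
  assumes "\<And>i. i < k \<Longrightarrow> \<bar>x - real i\<bar> \<le> y - real i"
  shows "\<bar>x gchoose k\<bar> \<le> y gchoose k"
proof -
  have "\<bar>\<Prod>i=0..<k. x - real i\<bar> \<le> (\<Prod>i=0..<k. y - real i)"
    unfolding abs_prod using assms by (intro prod_mono) auto
  then show ?thesis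
    by (simp add: gbinomial_prod_rev divide_right_mono)
qed

lemma abs_gchoose_unit_interval:
  fixes b :: real
  assumes "0 < b" "b < 1" "k > 0"
  shows "\<bar>b gchoose k\<bar> = b * pochhammer (1 - b) (k - 1) / fact k"
proof -
  obtain j where k: "k = Suc j" using assms(3) gr0_implies_Suc by blast
  have "pochhammer (1 - b) j > 0" using assms by (intro pochhammer_pos) auto
  then show ?thesis
    using assms unfolding k gbinomial_pochhammer pochhammer_rec
    by (simp add: abs_mult)
qed

lemma pochhammer_one_minus_div_fact:
  fixes b :: real
  shows "pochhammer (1 - b) n / fact n = (\<Prod>m=1..n. 1 - b / real m)"
proof (induction n)
  case 0
  then show ?case by simp
next
  case (Suc n)
  have "pochhammer (1 - b) (Suc n) / fact (Suc n)
      = pochhammer (1 - b) n / fact n * (1 - b / real (Suc n))"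
    by (simp add: pochhammer_Suc field_simps del: of_nat_Suc) (simp add: algebra_simps)
  then show ?case using Suc by simp
qed

lemma gchoose_mult_abs_gchoose_unit_interval:
  fixes b :: real
  assumes b: "0 < b" "b < 1" and k: "1 \<le> k" "k \<le> n"
  shows "((real n - b) gchoose (n - k)) * \<bar>b gchoose k\<bar>
    = real (n choose k) * ((1 - b) / (real k - b)) * (b * (\<Prod>m=2..n. 1 - b / real m))"
proof -
  have upper: "(real n - b) gchoose (n - k) = pochhammer (real k + 1 - b) (n - k) / fact (n - k)"
    using k by (simp add: gbinomial_pochhammer' of_nat_diff algebra_simps)
  obtain j where j: "k = Suc j" using k by (cases k) auto
  have "pochhammer (1 - b) n = pochhammer (1 - b) k * pochhammer (real k + 1 - b) (n - k)"
    using pochhammer_product[OF k(2), of "1 - b"] by (simp add: algebra_simps)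
  also have "pochhammer (1 - b) k = pochhammer (1 - b) (k - 1) * (real k - b)"
    by (simp add: j pochhammer_Suc algebra_simps)
  finally have split: "pochhammer (1 - b) n
      = pochhammer (1 - b) (k - 1) * pochhammer (real k + 1 - b) (n - k) * (real k - b)"
    by (simp add: algebra_simps)
  have full: "pochhammer (1 - b) n / fact n = (1 - b) * (\<Prod>m=2..n. 1 - b / real m)"
    using k by (simp add: pochhammer_one_minus_div_fact prod.atLeast_Suc_atMost numeral_2_eq_2)
  have kb: "real k - b > 0" using b k by linarith
  have k0: "k > 0" using k by simp
  have "((real n - b) gchoose (n - k)) * \<bar>b gchoose k\<bar>
      = b / (real k - b) * (pochhammer (1 - b) n / fact n) * (fact n / (fact k * fact (n - k)))"
    unfolding upper abs_gchoose_unit_interval[OF b k0] split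
    using kb by (simp add: field_simps)
  also have "fact n / (fact k * fact (n - k)) = real (n choose k)"
    by (rule binomial_fact[OF k(2), symmetric])
  finally show ?thesis unfolding full by (simp add: field_simps)
qed

lemma ln_Suc_minus_ln2_le_sum_inverse:
  assumes "n \<ge> 1"
  shows "ln (real n + 1) - ln 2 \<le> (\<Sum>m=2..n. 1 / real m)"
  using assms
proof (induction n rule: dec_induct)
  case base
  then show ?case by simp
next
  case (step n)
  have "1 + 1 / (real n + 1) = (real n + 2) / (real n + 1)"
    by (simp add: field_simps)
  then have "ln (real n + 2) - ln (real n + 1) = ln (1 + 1 / (real n + 1))"
    by (simp add: ln_div)
  also have "\<dots> \<le> 1 / (real n + 1)"
    by (rule ln_add_one_self_le_self) simp
  finally show ?case
    using step by (simp add: add.commute)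
qed

lemma mult_exp_minus_le: "t * exp (- t) \<le> exp (- 1 :: real)"
proof -
  have "t \<le> exp (t - 1)" using exp_ge_add_one_self[of "t - 1"] by simp
  then have "t * exp (- t) \<le> exp (t - 1) * exp (- t)" by (simp add: mult_right_mono)
  then show ?thesis by (simp flip: exp_add)
qed

lemma mult_prod_one_minus_div_le:
  fixes b :: real
  assumes n: "n \<ge> 3" and b: "0 < b" "b \<le> 2"
  shows "b * (\<Prod>m=2..n. 1 - b / real m) \<le> 1 / (exp 1 * (ln (real n) - ln 2))"
proof -
  define L where "L = ln (real n) - ln 2"
  have L: "L > 0" unfolding L_def using n by (simp add: ln_less_cancel_iff)
  have "ln (real n) \<le> ln (real n + 1)" using n by simp
  then have "L \<le> (\<Sum>m=2..n. 1 / real m)"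
    using ln_Suc_minus_ln2_le_sum_inverse[of n] n unfolding L_def by linarith
  moreover have "(\<Sum>m=2..n. b / real m) = b * (\<Sum>m=2..n. 1 / real m)"
    by (simp add: sum_distrib_left)
  ultimately have harmonic: "b * L \<le> (\<Sum>m=2..n. b / real m)"
    using b by (simp add: mult_left_mono)
  have "(\<Prod>m=2..n. 1 - b / real m) \<le> (\<Prod>m=2..n. exp (- (b / real m)))"
  proof (rule prod_mono)
    fix m assume "m \<in> {2..n}"
    then have "b / real m \<le> 1" using b by (simp add: divide_le_eq)
    then show "0 \<le> 1 - b / real m \<and> 1 - b / real m \<le> exp (- (b / real m))"
      using exp_ge_add_one_self[of "- (b / real m)"] by simp
  qed
  also have "\<dots> = exp (- (\<Sum>m=2..n. b / real m))"
    by (simp add: exp_sum sum_negf[symmetric])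
  also have "\<dots> \<le> exp (- (b * L))"
    using harmonic by simp
  finally have "b * (\<Prod>m=2..n. 1 - b / real m) \<le> (b * L) * exp (- (b * L)) / L"
    using b L by (simp add: mult_left_mono)
  also have "\<dots> \<le> exp (- 1) / L"
    using L by (intro divide_right_mono mult_exp_minus_le) simp
  finally show ?thesis unfolding L_def by (simp add: exp_minus field_simps)
qed

lemma binomial_div_Suc: "real (n choose k) / (real k + 1) = real (Suc n choose Suc k) / (real n + 1)"
proof -
  have "real (Suc k) * real (Suc n choose Suc k) = real (Suc n) * real (n choose k)"
    by (metis Suc_times_binomial of_nat_mult)
  then show ?thesis by (simp add: field_simps)
qed

lemma sum_binomial_div_Suc_le:
  "(\<Sum>k=0..n. real (n choose k) / (real k + 1)) \<le> 2 ^ (n + 1) / (real n + 1)"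
proof -
  have "(\<Sum>k=0..n. real (Suc n choose Suc k)) = (\<Sum>j=1..Suc n. real (Suc n choose j))"
    by (simp only: One_nat_def sum.shift_bounds_cl_Suc_ivl)
  also have "\<dots> \<le> (\<Sum>j=0..Suc n. real (Suc n choose j))"
    by (intro sum_mono2) auto
  also have "\<dots> = 2 ^ (n + 1)"
    using choose_row_sum[of "Suc n"] by (simp flip: atMost_atLeast0 of_nat_sum)
  finally show ?thesis
    by (simp add: binomial_div_Suc sum_divide_distrib[symmetric] divide_right_mono del: binomial_Suc_Suc)
qed

lemma sum_binomial_div_Suc_Suc_le:
  "(\<Sum>k=0..n. real (n choose k) / ((real k + 1) * (real k + 2)))
    \<le> 2 ^ (n + 2) / ((real n + 1) * (real n + 2))"
proof -
  have shift: "real (n choose k) / ((real k + 1) * (real k + 2))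
      = real (Suc n choose Suc k) / (real (Suc k) + 1) / (real n + 1)" for k
  proof -
    have "real (n choose k) / ((real k + 1) * (real k + 2))
        = real (n choose k) / (real k + 1) / (real k + 2)"
      by (simp only: divide_divide_eq_left)
    also have "\<dots> = real (Suc n choose Suc k) / (real n + 1) / (real k + 2)"
      by (simp only: binomial_div_Suc)
    finally show ?thesis by (simp add: field_simps del: binomial_Suc_Suc)
  qed
  have "(\<Sum>k=0..n. real (Suc n choose Suc k) / (real (Suc k) + 1))
      \<le> (\<Sum>j=0..Suc n. real (Suc n choose j) / (real j + 1))"
    unfolding sum.atLeast0_atMost_Suc_shift[of _ n] comp_def by simp
  also have "\<dots> \<le> 2 ^ (n + 2) / (real n + 2)"
    using sum_binomial_div_Suc_le[of "Suc n"] by (simp add: add_ac)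
  finally have "(\<Sum>k=0..n. real (Suc n choose Suc k) / (real (Suc k) + 1)) / (real n + 1)
      \<le> 2 ^ (n + 2) / (real n + 2) / (real n + 1)"
    by (rule divide_right_mono) simp_all
  then show ?thesis
    unfolding shift sum_divide_distrib[symmetric] by (simp add: mult.commute)
qed

lemma sum_binomial_weight_le:
  assumes n: "n \<ge> 4"
  shows "(\<Sum>k=0..n. real (n choose k) * (1 / (real k + 1) + 8 / ((real k + 1) * (real k + 2))))
    \<le> 2 ^ (n + 1) / real n * (1 + 15 / (real n - 3))"
proof -
  define N where "N = real n"
  have N: "N \<ge> 4" unfolding N_def using n by simp
  have "(\<Sum>k=0..n. real (n choose k) * (1 / (real k + 1) + 8 / ((real k + 1) * (real k + 2))))
      = (\<Sum>k=0..n. real (n choose k) / (real k + 1))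
        + 8 * (\<Sum>k=0..n. real (n choose k) / ((real k + 1) * (real k + 2)))"
    by (simp add: sum.distrib sum_distrib_left distrib_left mult.commute)
  also have "\<dots> \<le> 2 ^ (n + 1) / (N + 1) + 8 * (2 * 2 ^ (n + 1) / ((N + 1) * (N + 2)))"
    using sum_binomial_div_Suc_le[of n] sum_binomial_div_Suc_Suc_le[of n]
    unfolding N_def by simp
  also have "\<dots> = 2 ^ (n + 1) * ((N + 18) / ((N + 1) * (N + 2)))"
  proof -
    have "2 ^ (n + 1) / (N + 1) = 2 ^ (n + 1) * (N + 2) / ((N + 1) * (N + 2))"
      using N by simp
    then show ?thesis by (simp add: add_divide_distrib[symmetric] algebra_simps)
  qed
  also have "\<dots> \<le> 2 ^ (n + 1) * ((N + 12) / (N * (N - 3)))"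
  proof -
    have "(N + 18) * (N * (N - 3)) \<le> (N + 12) * ((N + 1) * (N + 2))"
      using N by (simp add: algebra_simps)
    then show ?thesis
      using N by (simp add: frac_le_eq divide_nonpos_pos)
  qed
  also have "\<dots> = 2 ^ (n + 1) / N * (1 + 15 / (N - 3))"
    using N by (simp add: field_simps)
  finally show ?thesis unfolding N_def .
qed

lemma one_minus_div_diff_le_weight:
  fixes b :: real
  assumes b: "0 < b" "b < 1" and k: "k \<ge> 2"
  shows "(1 - b) / (real k - b) \<le> 1 / (real k + 1) + 8 / ((real k + 1) * (real k + 2))"
proof -
  have k2: "real k \<ge> 2" using k by simp
  have "(1 - b) * (real k - 1) \<le> real k - b"
  proof -
    have "b * 2 \<le> b * real k" using b k2 by simp
    then show ?thesis by (simp add: algebra_simps)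
  qed
  then have "(1 - b) / (real k - b) \<le> 1 / (real k - 1)"
    using k2 b by (simp add: field_simps)
  also have "\<dots> \<le> (real k + 10) / ((real k + 1) * (real k + 2))"
  proof -
    have "(real k + 1) * (real k + 2) \<le> (real k + 10) * (real k - 1)"
      using k2 by (simp add: algebra_simps)
    then show ?thesis
      using k2 by (simp add: frac_le_eq divide_nonpos_pos)
  qed
  also have "\<dots> = 1 / (real k + 1) + 8 / ((real k + 1) * (real k + 2))"
  proof -
    have split: "1 / (real k + 1) = (real k + 2) / ((real k + 1) * (real k + 2))"
      using k2 by simp
    show ?thesis unfolding split add_divide_distrib[symmetric] by (simp add: add_ac)
  qed
  finally show ?thesis .
qed

lemma sum_abs_edge_terms_le:
  fixes a b :: real
  assumes n: "n \<ge> 4" and b: "0 < b" "b < 1" and a: "-1 < a" "a < 1 - b"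
  shows "(\<Sum>k=1..n. \<bar>((real n - 1 + a) gchoose (n - k)) * (b gchoose k)\<bar>)
    \<le> (real n + 2 ^ (n + 1) / real n * (1 + 15 / (real n - 3))) / (exp 1 * (ln (real n) - ln 2))"
proof -
  define M where "M = b * (\<Prod>m=2..n. 1 - b / real m)"
  have M: "M \<le> 1 / (exp 1 * (ln (real n) - ln 2))"
    unfolding M_def using mult_prod_one_minus_div_le n b by simp
  have M0: "M \<ge> 0"
    unfolding M_def using b by (intro mult_nonneg_nonneg prod_nonneg) (auto simp: divide_le_eq)
  define w where "w k = 1 / (real k + 1) + 8 / ((real k + 1) * (real k + 2))" for k :: nat
  have w0: "w k \<ge> 0" for k unfolding w_def by simp
  have each_term: "\<bar>((real n - 1 + a) gchoose (n - k)) * (b gchoose k)\<bar>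
      \<le> ((if k = 1 then real n else 0) + real (n choose k) * w k) * M" if k: "k \<in> {1..n}" for k
  proof -
    have "\<bar>(real n - 1 + a) gchoose (n - k)\<bar> \<le> (real n - b) gchoose (n - k)"
      using k a by (intro abs_gchoose_le_gchoose) auto
    then have "\<bar>((real n - 1 + a) gchoose (n - k)) * (b gchoose k)\<bar>
        \<le> ((real n - b) gchoose (n - k)) * \<bar>b gchoose k\<bar>"
      by (simp add: abs_mult mult_right_mono)
    also have "\<dots> = real (n choose k) * ((1 - b) / (real k - b)) * M"
      unfolding M_def using k b by (intro gchoose_mult_abs_gchoose_unit_interval) auto
    also have "\<dots> \<le> ((if k = 1 then real n else 0) + real (n choose k) * w k) * M"
    proof (intro mult_right_mono M0)
      show "real (n choose k) * ((1 - b) / (real k - b))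
          \<le> (if k = 1 then real n else 0) + real (n choose k) * w k"
      proof (cases "k = 1")
        \<comment> \<open>for k = 1 the ratio is exactly 1, which the weight w 1 does not dominate\<close>
        case True
        then show ?thesis using b w0[of 1] by simp
      next
        case False
        then have "(1 - b) / (real k - b) \<le> w k"
          unfolding w_def using k b by (intro one_minus_div_diff_le_weight) auto
        then show ?thesis
          using False by (simp add: mult_left_mono del: times_divide_eq_right)
      qed
    qed
    finally show ?thesis .
  qed
  have "(\<Sum>k=1..n. \<bar>((real n - 1 + a) gchoose (n - k)) * (b gchoose k)\<bar>)
      \<le> (\<Sum>k=1..n. ((if k = 1 then real n else 0) + real (n choose k) * w k) * M)"
    by (intro sum_mono each_term)
  also have "\<dots> = (real n + (\<Sum>k=1..n. real (n choose k) * w k)) * M"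
    using n by (simp add: sum_distrib_right[symmetric] sum.distrib)
  also have "\<dots> \<le> (real n + (\<Sum>k=0..n. real (n choose k) * w k)) * M"
    using w0[of 0] M0 by (simp add: sum.atLeast_Suc_atMost[of 0 n] mult_right_mono)
  also have "\<dots> \<le> (real n + 2 ^ (n + 1) / real n * (1 + 15 / (real n - 3))) * M"
    using sum_binomial_weight_le[OF n] M0 unfolding w_def by (simp add: mult_right_mono)
  also have "\<dots> \<le> (real n + 2 ^ (n + 1) / real n * (1 + 15 / (real n - 3)))
      * (1 / (exp 1 * (ln (real n) - ln 2)))"
    using M n by (intro mult_left_mono) auto
  finally show ?thesis by simp
qed

lemma ln_plus_half_le_ln_minus_one_mult:
  assumes n: "n \<ge> 4"
  shows "ln (real n) + real n / 2 \<le> (ln (real n) - 1) * (real n + 12)"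
proof -
  have ln2: "ln (2::real) \<ge> 2 / 3" by (rule ln2_ge_two_thirds)
  have "ln (real n) * (real n + 11) \<ge> 3 / 2 * real n + 12"
  proof (cases "n \<le> 7")
    case True
    have "ln (real n) \<ge> ln 4" using n by simp
    moreover have "ln (4::real) = 2 * ln 2" using ln_realpow[of 2 2] by simp
    ultimately have "ln (real n) \<ge> 4 / 3" using ln2 by linarith
    then have "ln (real n) * (real n + 11) \<ge> 4 / 3 * (real n + 11)"
      by (rule mult_right_mono) simp
    then show ?thesis using True by simp
  next
    case False
    have "ln (real n) \<ge> ln 8" using False by simp
    moreover have "ln (8::real) = 3 * ln 2" using ln_realpow[of 2 3] by simp
    ultimately have "ln (real n) \<ge> 2" using ln2 by linarith
    then have "ln (real n) * (real n + 11) \<ge> 2 * (real n + 11)"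
      by (rule mult_right_mono) simp
    then show ?thesis by simp
  qed
  then show ?thesis by (simp add: algebra_simps)
qed

lemma edge_sum_estimates:
  fixes n :: nat and S :: real
  defines "c \<equiv> 1 + 15 / (real n - 3)" and "L \<equiv> ln (real n) - ln 2"
  assumes n: "n \<ge> 4"
    and S: "S \<le> (real n + 2 ^ (n + 1) / real n * c) / (exp 1 * L)"
  shows "1 + S \<le> 2 ^ (n + 1) / (exp 1 * real n * L) * c
           * (1 + exp 1 * (ln (real n) - 1) * real n * (real n + 1) / 2 ^ (n + 1))"
    and "S \<le> 2 ^ (n + 1) / (exp 1 * real n * L) * c
           * (1 + exp 1 * (ln (real n) - 1) * (real n)^2 / 2 ^ (n + 1))"
proof -
  define N where "N = real n"
  define y where "y = ln N - 1"
  define P :: real where "P = 2 ^ (n + 1)"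
  have N: "N \<ge> 4" unfolding N_def using n by simp
  have L: "L > 0" unfolding L_def using n by (simp add: ln_less_cancel_iff)
  have e: "exp 1 \<ge> (2::real)" using exp_ge_add_one_self[of 1] by simp
  have cN: "c * (N + 1) \<ge> N + 12"
  proof -
    have "c * (N + 1) = (N + 12) * ((N + 1) / (N - 3))"
      unfolding c_def N_def[symmetric] using N by (simp add: field_simps)
    moreover have "(N + 1) / (N - 3) \<ge> 1" using N by simp
    ultimately show ?thesis using N mult_left_mono[of 1 "(N + 1) / (N - 3)" "N + 12"] by simp
  qed
  have y: "y \<ge> 0" unfolding y_def N_def using n exp_le by (simp add: ln_ge_iff)
  have key: "ln N + N / 2 \<le> c * y * (N + 1)"
  proof -
    have "ln N + N / 2 \<le> y * (N + 12)"
      unfolding y_def N_def using ln_plus_half_le_ln_minus_one_mult[OF n] by simp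
    also have "\<dots> \<le> y * (c * (N + 1))" using cN y by (intro mult_left_mono)
    finally show ?thesis by (simp add: ac_simps)
  qed
  have NE: "N / exp 1 \<le> N / 2" using N e by (intro divide_left_mono) auto
  have "1 + N / (exp 1 * L) \<le> c * y * (N + 1) / L"
  proof -
    have "L + N / exp 1 \<le> c * y * (N + 1)"
      using key NE ln_gt_zero[of "2::real"] unfolding L_def N_def by linarith
    then have "(L + N / exp 1) / L \<le> c * y * (N + 1) / L"
      using L by (simp add: divide_right_mono)
    moreover have "(L + N / exp 1) / L = 1 + N / (exp 1 * L)"
      using L by (simp add: field_simps)
    ultimately show ?thesis by simp
  qed
  moreover have "N / (exp 1 * L) \<le> c * y * N / L"
  proof -
    have "ln N \<ge> 1 / 2" using y unfolding y_def by simp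
    then have "(N + 1) / 2 \<le> c * y * (N + 1)" using key by simp
    then have "1 / 2 * (N + 1) \<le> c * y * (N + 1)" by simp
    then have "1 / 2 \<le> c * y" using N by (simp only: mult_le_cancel_right)
    moreover have "1 / exp 1 \<le> (1 / 2 :: real)" using e by simp
    ultimately have "1 / exp 1 \<le> c * y" by linarith
    then show ?thesis using N L by (simp add: field_simps)
  qed
  moreover have "S \<le> (P / N * c) / (exp 1 * L) + N / (exp 1 * L)"
    using S unfolding N_def P_def by (simp add: add_divide_distrib)
  moreover have "P / (exp 1 * N * L) * c * (1 + exp 1 * y * N * (N + 1) / P)
      = (P / N * c) / (exp 1 * L) + c * y * (N + 1) / L"
    and "P / (exp 1 * N * L) * c * (1 + exp 1 * y * N ^ 2 / P)
      = (P / N * c) / (exp 1 * L) + c * y * N / L"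
    using N L unfolding P_def by (simp_all add: field_simps power2_eq_square)
  ultimately show "1 + S \<le> 2 ^ (n + 1) / (exp 1 * real n * L) * c
           * (1 + exp 1 * (ln (real n) - 1) * real n * (real n + 1) / 2 ^ (n + 1))"
    and "S \<le> 2 ^ (n + 1) / (exp 1 * real n * L) * c
           * (1 + exp 1 * (ln (real n) - 1) * (real n)^2 / 2 ^ (n + 1))"
    unfolding N_def y_def P_def by linarith+
qed

theorem lemma27:
  fixes n :: nat and a1 a2 a3 :: real
  assumes "n \<ge> 4"
    and "0 < a2" and "a2 < 1" and "0 < a3" and "a3 < 1"
    and "a1 = 1 - a2 - a3"
  defines "lam \<equiv> ((real n - 1 + a1) / real n, a2 / real n, a3 / real n)"
  shows "((\<Sum>i2 = 0..n. \<bar>lagrange_l n (n - i2, i2, 0) lam\<bar>)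
           \<le> 2 ^ (n + 1) / (exp 1 * real n * (ln (real n) - ln 2))
             * (1 + 15 / (real n - 3))
             * (1 + exp 1 * (ln (real n) - 1) * real n * (real n + 1) / 2 ^ (n + 1))) \<and>
         ((\<Sum>i3 = 1..n. \<bar>lagrange_l n (n - i3, 0, i3) lam\<bar>)
           \<le> 2 ^ (n + 1) / (exp 1 * real n * (ln (real n) - ln 2))
             * (1 + 15 / (real n - 3))
             * (1 + exp 1 * (ln (real n) - 1) * (real n)^2 / 2 ^ (n + 1)))"
proof -
  have n: "n \<ge> 4" and a1: "-1 < a1" "a1 < 1 - a2" "a1 < 1 - a3"
    using assms by auto
  have edge2: "lagrange_l n (n - k, k, 0) lam = ((real n - 1 + a1) gchoose (n - k)) * (a2 gchoose k)"
    and edge3: "lagrange_l n (n - k, 0, k) lam = ((real n - 1 + a1) gchoose (n - k)) * (a3 gchoose k)"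
    for k
    using n by (simp_all add: lagrange_l_def lam_def lag_factor_scaled)
  have "\<bar>(real n - 1 + a1) gchoose n\<bar> \<le> real n gchoose n"
    using a1 assms(2) by (intro abs_gchoose_le_gchoose) auto
  then have vertex: "\<bar>(real n - 1 + a1) gchoose n\<bar> \<le> 1"
    by (simp flip: binomial_gbinomial)
  have "(\<Sum>i2 = 0..n. \<bar>lagrange_l n (n - i2, i2, 0) lam\<bar>)
      = \<bar>(real n - 1 + a1) gchoose n\<bar> + (\<Sum>k = 1..n. \<bar>lagrange_l n (n - k, k, 0) lam\<bar>)"
    by (simp add: sum.atLeast_Suc_atMost[of 0 n] edge2)
  then show ?thesis
    using vertex edge_sum_estimates[OF n sum_abs_edge_terms_le[OF n assms(2,3) a1(1,2)]]
      edge_sum_estimates(2)[OF n sum_abs_edge_terms_le[OF n assms(4,5) a1(1,3)]]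
    unfolding edge2 edge3 by linarith
qed

end
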